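(* For every integer $s\geqslant2$, \[P(B_{3,s,3})=-\sum_{\mathrm S_1,\mathrm S_2,\mathrm S_3}(-1)^{\#\mathrm S_1+\#\mathrm S_2+\#\mathrm S_3}\,2^{-|T_1|}\,4^{-|T_{2-3}|},\] where the sum is over all ordered triples of nonempty sets of pairwise distinct paths from the centre to the boundary. The sets $T_1$, $T_{2-3}$, the notation $\#\mathrm S$ and the event $B_{3,s,3}$ are defined in the context.
   Context: Consider the tiling of the plane by regular hexagons of side $1$, called cells. For an integer $s\geqslant2$, fix a cell $O$. Let $M_s$ be the set of all cells lying inside the regular hexagon that is centred at the centre of $O$, has sides of length $s\sqrt3$, and has its sides perpendicular to sides of the cells. The set $M_s$ has $m+1=1+3s(s-1)$ cells. Number the cells other than $O$ as $v_1,\dots,v_m$. Two cells are neighbours if they share a side. A cell of $M_s$ is a boundary cell if it has fewer than six neighbours in $M_s$. A path from the centre to the boundary is a sequence of pairwise distinct cells $v_{j_1},\dots,v_{j_t}$ with the following properties: - $v_{j_1}$ is a neighbour of $O$; - $v_{j_l}$ and $v_{j_{l+1}}$ are neighbours for each $l$; - $v_{j_t}$ is a boundary cell. For a nonempty set $\mathrm S=\{s_1,\dots,s_k\}$ of pairwise distinct paths, define $\#\mathrm S=k$ and $\mathrm{Cells}(\mathrm S)=s_1\cup\dots\cup s_k$, the set of cells used. For a triple $(\mathrm S_1,\mathrm S_2,\mathrm S_3)$: - $T_1$ is the set of cells belonging to exactly one of $\mathrm{Cells}(\mathrm S_1),\mathrm{Cells}(\mathrm S_2),\mathrm{Cells}(\mathrm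 S_3)$; - $T_{2-3}$ is the set of cells belonging to at least two of them. Let $\Omega_{3,s}$ be the set of triples $(f_1,f_2,f_3)$ of functions $\{v_1,\dots,v_m\}\to\{0,1\}$ with $f_1+f_2+f_3\equiv1\pmod2$ at every cell, with the uniform probability measure. Fluid $i$ flows if some path from the centre to the boundary has $f_i=1$ on all its cells. $B_{3,s,3}$ is the event that all three fluids flow. *)

theory Defs
  imports "HOL-Probability.Probability"
begin

text \<open>Hexagonal cells in axial coordinates; the cell O is (0,0).\<close>
type_synonym cell = "int \<times> int"

definition hexdist :: "cell \<Rightarrow> int" where
  "hexdist c = max \<bar>fst c\<bar> (max \<bar>snd c\<bar> \<bar>fst c + snd c\<bar>)"

definition nbr :: "cell \<Rightarrow> cell \<Rightarrow> bool" where
  "nbr a b \<longleftrightarrow> (fst a - fst b, snd a - snd b) \<in>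
     {(1,0), (-1,0), (0,1), (0,-1), (1,-1), (-1,1)}"

definition origin :: cell where "origin = (0, 0)"

definition Ms :: "nat \<Rightarrow> cell set" where
  "Ms s = {c. hexdist c \<le> int s - 1}"

definition Vs :: "nat \<Rightarrow> cell set" where
  "Vs s = Ms s - {origin}"

definition boundary :: "nat \<Rightarrow> cell set" where
  "boundary s = {c \<in> Ms s. card {d \<in> Ms s. nbr c d} < 6}"

definition paths :: "nat \<Rightarrow> cell list set" where
  "paths s = {p. p \<noteq> [] \<and> distinct p \<and> set p \<subseteq> Vs s \<and> nbr origin (hd p)
      \<and> (\<forall>i. Suc i < length p \<longrightarrow> nbr (p ! i) (p ! Suc i))
      \<and> last p \<in> boundary s}"

definition Cells :: "cell list set \<Rightarrow> cell set" where
  "Cells S = (\<Union>p\<in>S. set p)"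

definition mult3 :: "cell set \<Rightarrow> cell set \<Rightarrow> cell set \<Rightarrow> cell \<Rightarrow> nat" where
  "mult3 A B C c = of_bool (c \<in> A) + of_bool (c \<in> B) + of_bool (c \<in> C)"

definition T1 :: "cell list set \<Rightarrow> cell list set \<Rightarrow> cell list set \<Rightarrow> cell set" where
  "T1 S1 S2 S3 = {c. mult3 (Cells S1) (Cells S2) (Cells S3) c = 1}"

definition T23 :: "cell list set \<Rightarrow> cell list set \<Rightarrow> cell list set \<Rightarrow> cell set" where
  "T23 S1 S2 S3 = {c. mult3 (Cells S1) (Cells S2) (Cells S3) c \<ge> 2}"

text \<open>Omega_{3,s}: triples of 0/1-functions on v_1..v_m (extended by False outside)
  with f1 + f2 + f3 odd at every cell.\<close>
definition Omega3 :: "nat \<Rightarrow> ((cell \<Rightarrow> bool) \<times> (cell \<Rightarrow> bool) \<times> (cell \<Rightarrow> bool)) set" where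
  "Omega3 s = {(f1, f2, f3).
      (\<forall>c. c \<notin> Vs s \<longrightarrow> \<not> f1 c \<and> \<not> f2 c \<and> \<not> f3 c)
    \<and> (\<forall>c\<in>Vs s. odd (of_bool (f1 c) + of_bool (f2 c) + of_bool (f3 c) :: nat))}"

definition flows :: "nat \<Rightarrow> (cell \<Rightarrow> bool) \<Rightarrow> bool" where
  "flows s f \<longleftrightarrow> (\<exists>p\<in>paths s. \<forall>c\<in>set p. f c)"

definition B333 :: "nat \<Rightarrow> ((cell \<Rightarrow> bool) \<times> (cell \<Rightarrow> bool) \<times> (cell \<Rightarrow> bool)) set" where
  "B333 s = {(f1, f2, f3) \<in> Omega3 s. flows s f1 \<and> flows s f2 \<and> flows s f3}"

end

theory Submission
  imports Defs
begin

text \<open>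
  By inclusion-exclusion over the nonempty sets S of paths, the indicator that fluid i flows is
  -(\<Sum>S. (-1)^#S [Cells S \<subseteq> {f_i = 1}]). Multiplying the three expansions and averaging
  over Omega_{3,s} leaves the probability that each fluid i is present on a prescribed cell set A_i.
  Under the uniform measure the value triples (f_1 c, f_2 c, f_3 c) at distinct cells are
  independent and uniform on the four triples with odd sum, so this probability is a product over
  cells: a cell demanded by no fluid contributes 1, by exactly one fluid 1/2, and by two or three
  fluids 1/4, since then only (1,1,1) remains.
\<close>

lemma prod_of_bool:
  "finite A \<Longrightarrow> (\<Prod>x\<in>A. of_bool (P x)) = (of_bool (\<forall>x\<in>A. P x) :: 'a::comm_semiring_1)"
  by (induction A rule: finite_induct) auto

lemma of_bool_Bex_inclusion_exclusion:
  assumes "finite A"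
  shows "(of_bool (\<exists>x\<in>A. P x) :: 'a::comm_ring_1) =
    - (\<Sum>X\<in>Pow A - {{}}. (-1) ^ card X * of_bool (\<forall>x\<in>X. P x))"
proof -
  have "(of_bool (\<exists>x\<in>A. P x) :: 'a) = 1 - of_bool (\<forall>x\<in>A. \<not> P x)"
    by (simp add: of_bool_not_iff)
  also have "\<dots> = 1 - (\<Prod>x\<in>A. - of_bool (P x) + 1)"
    by (simp add: prod_of_bool[OF assms, symmetric] of_bool_not_iff)
  also have "\<dots> = 1 - (\<Sum>X\<in>Pow A. (\<Prod>x\<in>X. - of_bool (P x)) * (\<Prod>x\<in>A - X. 1))"
    by (simp only: prod_add[OF assms])
  also have "\<dots> = 1 - (\<Sum>X\<in>Pow A. (-1) ^ card X * of_bool (\<forall>x\<in>X. P x))"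
    using assms by (intro arg_cong2[where f = minus] sum.cong refl)
      (simp add: prod_uminus prod_of_bool finite_subset)
  also have "\<dots> = 1 - (1 + (\<Sum>X\<in>Pow A - {{}}. (-1) ^ card X * of_bool (\<forall>x\<in>X. P x)))"
    using assms by (subst sum.remove[of _ "{}"]) (simp_all del: sum_mult_of_bool_eq)
  finally show ?thesis
    by simp
qed

lemma sum_product3:
  "sum f A * sum g B * sum h C =
    (\<Sum>(a, b, c) \<in> A \<times> B \<times> C. f a * g b * h c :: 'a::comm_semiring_0)"
  by (subst mult.assoc) (simp only: sum_product sum.cartesian_product mult.assoc split_def)

lemma prod_if_eq_power:
  "finite A \<Longrightarrow> {x. P x} \<subseteq> A \<Longrightarrow> (\<Prod>x\<in>A. if P x then a else 1) = a ^ card {x. P x}"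
  by (simp add: prod.If_cases Int_absorb1)

definition unzip3 :: "('a \<Rightarrow> 'b \<times> 'c \<times> 'd) \<Rightarrow> ('a \<Rightarrow> 'b) \<times> ('a \<Rightarrow> 'c) \<times> ('a \<Rightarrow> 'd)" where
  "unzip3 g = ((\<lambda>x. fst (g x)), (\<lambda>x. fst (snd (g x))), (\<lambda>x. snd (snd (g x))))"

lemma inj_unzip3: "inj unzip3"
  by (rule injI) (auto simp: unzip3_def fun_eq_iff prod_eq_iff)

lemma finite_Vs: "finite (Vs s)"
proof (rule finite_subset)
  show "Vs s \<subseteq> {-int s..int s} \<times> {-int s..int s}"
    by (auto simp: Vs_def Ms_def hexdist_def)
qed simp

lemma finite_paths: "finite (paths s)"
proof (rule finite_subset)
  show "paths s \<subseteq> {p. set p \<subseteq> Vs s \<and> distinct p}"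
    by (auto simp: paths_def)
qed (rule finite_subset_distinct[OF finite_Vs])

lemma Cells_subset_Vs: "S \<subseteq> paths s \<Longrightarrow> Cells S \<subseteq> Vs s"
  by (auto simp: Cells_def paths_def)

lemma of_bool_flows:
  "(of_bool (flows s f) :: 'a::comm_ring_1) =
    - (\<Sum>S\<in>Pow (paths s) - {{}}. (-1) ^ card S * of_bool (Cells S \<subseteq> Collect f))"
proof -
  have "flows s f \<longleftrightarrow> (\<exists>p\<in>paths s. set p \<subseteq> Collect f)"
    by (auto simp: flows_def)
  moreover have "\<And>S. Cells S \<subseteq> Collect f \<longleftrightarrow> (\<forall>p\<in>S. set p \<subseteq> Collect f)"
    by (auto simp: Cells_def)
  ultimately show ?thesis
    by (simp only: of_bool_Bex_inclusion_exclusion[OF finite_paths])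
qed

definition fluids_cover ::
    "'a set \<Rightarrow> 'a set \<Rightarrow> 'a set \<Rightarrow> (('a \<Rightarrow> bool) \<times> ('a \<Rightarrow> bool) \<times> ('a \<Rightarrow> bool)) set" where
  "fluids_cover A1 A2 A3 =
    {(f1, f2, f3). A1 \<subseteq> Collect f1 \<and> A2 \<subseteq> Collect f2 \<and> A3 \<subseteq> Collect f3}"

lemma of_bool_B333:
  assumes "\<omega> \<in> Omega3 s"
  defines "Q \<equiv> Pow (paths s) - {{}}"
  shows "(of_bool (\<omega> \<in> B333 s) :: 'a::comm_ring_1) =
    - (\<Sum>(S1, S2, S3) \<in> Q \<times> Q \<times> Q. (-1) ^ (card S1 + card S2 + card S3)
        * of_bool (\<omega> \<in> fluids_cover (Cells S1) (Cells S2) (Cells S3)))"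
proof -
  obtain f1 f2 f3 where \<omega>: "\<omega> = (f1, f2, f3)" by (cases \<omega>)
  have "(of_bool (\<omega> \<in> B333 s) :: 'a) =
      of_bool (flows s f1) * of_bool (flows s f2) * of_bool (flows s f3)"
    using assms by (simp add: \<omega> B333_def)
  also have "\<dots> = - (\<Sum>(S1, S2, S3) \<in> Q \<times> Q \<times> Q.
      (-1) ^ card S1 * of_bool (Cells S1 \<subseteq> Collect f1)
      * ((-1) ^ card S2 * of_bool (Cells S2 \<subseteq> Collect f2))
      * ((-1) ^ card S3 * of_bool (Cells S3 \<subseteq> Collect f3)))"
    by (simp add: of_bool_flows[of s] Q_def sum_product3)
  finally show ?thesis
    by (simp add: \<omega> fluids_cover_def power_add of_bool_conj mult_ac)
qed

definition odd_triples :: "(bool \<times> bool \<times> bool) set" where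
  "odd_triples = {(a, b, c). odd (of_bool a + of_bool b + of_bool c :: nat)}"

lemma odd_triples_eq:
  "odd_triples = {(True, False, False), (False, True, False), (False, False, True), (True, True, True)}"
  by (auto simp: odd_triples_def)

lemma mem_odd_triples:
  "w \<in> odd_triples \<longleftrightarrow> odd (of_bool (fst w) + of_bool (fst (snd w)) + of_bool (snd (snd w)) :: nat)"
  by (cases w) (simp add: odd_triples_def)

lemma Omega3_eq_image:
  "Omega3 s = unzip3 ` PiE_dflt (Vs s) (False, False, False) (\<lambda>_. odd_triples)"
proof (intro equalityI subsetI)
  fix \<omega> assume "\<omega> \<in> Omega3 s"
  then obtain f1 f2 f3 where "\<omega> = (f1, f2, f3)" "(f1, f2, f3) \<in> Omega3 s"
    by (cases \<omega>) auto
  then have "\<omega> = unzip3 (\<lambda>c. (f1 c, f2 c, f3 c))"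
    and "(\<lambda>c. (f1 c, f2 c, f3 c)) \<in> PiE_dflt (Vs s) (False, False, False) (\<lambda>_. odd_triples)"
    by (auto simp: unzip3_def Omega3_def PiE_dflt_def mem_odd_triples)
  then show "\<omega> \<in> unzip3 ` PiE_dflt (Vs s) (False, False, False) (\<lambda>_. odd_triples)"
    by blast
next
  fix \<omega> assume "\<omega> \<in> unzip3 ` PiE_dflt (Vs s) (False, False, False) (\<lambda>_. odd_triples)"
  then obtain g where \<omega>: "\<omega> = unzip3 g"
    and g: "g \<in> PiE_dflt (Vs s) (False, False, False) (\<lambda>_. odd_triples)"
    by blast
  from g have "\<And>c. c \<notin> Vs s \<Longrightarrow> g c = (False, False, False)"
    and "\<And>c. c \<in> Vs s \<Longrightarrow> g c \<in> odd_triples"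
    unfolding PiE_dflt_def by blast+
  then show "\<omega> \<in> Omega3 s"
    unfolding \<omega> Omega3_def unzip3_def by (simp add: mem_odd_triples)
qed

lemma finite_Omega3: "finite (Omega3 s)"
  by (simp add: Omega3_eq_image finite_PiE_dflt finite_Vs odd_triples_eq)

lemma Omega3_not_empty: "Omega3 s \<noteq> {}"
  by (simp add: Omega3_eq_image odd_triples_eq)

lemma pmf_of_set_Omega3:
  "pmf_of_set (Omega3 s) =
    map_pmf unzip3 (Pi_pmf (Vs s) (False, False, False) (\<lambda>_. pmf_of_set odd_triples))"
proof -
  let ?X = "PiE_dflt (Vs s) (False, False, False) (\<lambda>_. odd_triples)"
  have fin: "finite odd_triples" and ne: "odd_triples \<noteq> {}"
    by (simp_all add: odd_triples_eq)
  have "pmf_of_set (Omega3 s) = pmf_of_set (unzip3 ` ?X)"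
    by (simp only: Omega3_eq_image)
  also have "\<dots> = map_pmf unzip3 (pmf_of_set ?X)"
  proof (rule map_pmf_of_set_inj[symmetric])
    show "inj_on unzip3 ?X"
      using inj_unzip3 by (rule inj_on_subset) simp
    show "?X \<noteq> {}"
      using ne by simp
    show "finite ?X"
      using finite_Vs fin by (rule finite_PiE_dflt)
  qed
  also have "pmf_of_set ?X = Pi_pmf (Vs s) (False, False, False) (\<lambda>_. pmf_of_set odd_triples)"
    using finite_Vs fin ne by (intro Pi_pmf_of_set[symmetric])
  finally show ?thesis .
qed

lemma prob_odd_triples_cover:
  "measure_pmf.prob (pmf_of_set odd_triples)
     {w. (c \<in> A1 \<longrightarrow> fst w) \<and> (c \<in> A2 \<longrightarrow> fst (snd w)) \<and> (c \<in> A3 \<longrightarrow> snd (snd w))} =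
   (if mult3 A1 A2 A3 c = 1 then 1/2 else 1) * (if mult3 A1 A2 A3 c \<ge> 2 then 1/4 else 1)"
  by (cases "c \<in> A1"; cases "c \<in> A2"; cases "c \<in> A3")
    (simp_all add: measure_pmf_of_set odd_triples_eq mult3_def)

lemma prob_fluids_cover:
  assumes "A1 \<union> A2 \<union> A3 \<subseteq> Vs s"
  shows "measure_pmf.prob (pmf_of_set (Omega3 s)) (fluids_cover A1 A2 A3) =
    (1/2) ^ card {c. mult3 A1 A2 A3 c = 1} * (1/4) ^ card {c. mult3 A1 A2 A3 c \<ge> 2}"
proof -
  let ?allowed = "\<lambda>c. {w. (c \<in> A1 \<longrightarrow> fst w) \<and> (c \<in> A2 \<longrightarrow> fst (snd w))
                          \<and> (c \<in> A3 \<longrightarrow> snd (snd w))}"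
  have "unzip3 -` fluids_cover A1 A2 A3 = Pi (Vs s) ?allowed"
    using assms by (auto simp: unzip3_def fluids_cover_def Pi_iff subset_iff)
  then have "measure_pmf.prob (pmf_of_set (Omega3 s)) (fluids_cover A1 A2 A3) =
      (\<Prod>c\<in>Vs s. measure_pmf.prob (pmf_of_set odd_triples) (?allowed c))"
    by (simp add: pmf_of_set_Omega3 measure_Pi_pmf_Pi finite_Vs)
  also have "\<dots> = (\<Prod>c\<in>Vs s. (if mult3 A1 A2 A3 c = 1 then 1/2 else 1) *
                                (if mult3 A1 A2 A3 c \<ge> 2 then 1/4 else 1))"
    by (simp only: prob_odd_triples_cover)
  also have "\<dots> = (1/2) ^ card {c. mult3 A1 A2 A3 c = 1} * (1/4) ^ card {c. mult3 A1 A2 A3 c \<ge> 2}"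
  proof -
    have "{c. mult3 A1 A2 A3 c = 1} \<subseteq> Vs s" "{c. mult3 A1 A2 A3 c \<ge> 2} \<subseteq> Vs s"
      using assms by (auto simp: mult3_def)
    then show ?thesis
      by (simp add: prod.distrib prod_if_eq_power finite_Vs)
  qed
  finally show ?thesis .
qed

theorem proposition2:
  fixes s :: nat
  assumes "s \<ge> 2"
  shows "measure_pmf.prob (pmf_of_set (Omega3 s)) (B333 s) =
    - (\<Sum>(S1, S2, S3) \<in> (Pow (paths s) - {{}}) \<times> (Pow (paths s) - {{}}) \<times> (Pow (paths s) - {{}}).
        (-1) ^ (card S1 + card S2 + card S3)
        * (1/2) ^ card (T1 S1 S2 S3) * (1/4) ^ card (T23 S1 S2 S3) :: real)"
proof -
  \<comment> \<open>The identity holds for every s.\<close>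
  let ?O = "Omega3 s"
  let ?Q = "Pow (paths s) - {{}}"
  let ?sign = "\<lambda>(S1, S2, S3). (-1) ^ (card S1 + card S2 + card S3) :: real"
  let ?cover = "\<lambda>(S1, S2, S3). fluids_cover (Cells S1) (Cells S2) (Cells S3)"
  have average:
    "measure_pmf.prob (pmf_of_set ?O) A = (\<Sum>\<omega>\<in>?O. of_bool (\<omega> \<in> A)) / card ?O" for A
    using finite_Omega3 Omega3_not_empty by (simp add: measure_pmf_of_set Int_def)
  have "measure_pmf.prob (pmf_of_set ?O) (B333 s) =
      (\<Sum>\<omega>\<in>?O. - (\<Sum>S \<in> ?Q \<times> ?Q \<times> ?Q. ?sign S * of_bool (\<omega> \<in> ?cover S))) / card ?O"
    unfolding average by (intro arg_cong[where f = "\<lambda>x. x / _"] sum.cong refl)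
      (simp add: of_bool_B333 case_prod_beta)
  also have "\<dots> =
      - (\<Sum>S \<in> ?Q \<times> ?Q \<times> ?Q. ?sign S * ((\<Sum>\<omega>\<in>?O. of_bool (\<omega> \<in> ?cover S)) / card ?O))"
    by (simp add: sum_negf sum.swap[of _ ?O] sum_distrib_left sum_divide_distrib)
  also have "\<dots> = - (\<Sum>S \<in> ?Q \<times> ?Q \<times> ?Q. ?sign S * measure_pmf.prob (pmf_of_set ?O) (?cover S))"
    by (simp only: average)
  also have "\<dots> = - (\<Sum>(S1, S2, S3) \<in> ?Q \<times> ?Q \<times> ?Q. (-1) ^ (card S1 + card S2 + card S3)
        * (1/2) ^ card (T1 S1 S2 S3) * (1/4) ^ card (T23 S1 S2 S3))"
    by (intro arg_cong[where f = uminus] sum.cong refl)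
      (auto simp: prob_fluids_cover Cells_subset_Vs T1_def T23_def)
  finally show ?thesis .
qed

end
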